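(* Let $n\ge1$ and let $(f_3,\pi_1,\pi_2)$ be a triple where $f_3$ is a pairing of $[n]\cup[\hat n]$, $\pi_1$ is a set partition of $[n]\cup[\hat n]$ stable by $f_1$ and $f_3$, and $\pi_2$ is a set partition of $[n]\cup[\hat n]$ stable by $f_2$ and $f_3$, all blocks of both having even size. Then every block of $\pi_1$ and every block of $\pi_2$ contains as many hat numbers as non-hat numbers.
   Context: The ground set is $[n]\cup[\hat n]=\{1,\dots,n,\hat1,\dots,\hat n\}$; elements $1,\dots,n$ are non-hat numbers and $\hat1,\dots,\hat n$ are hat numbers. A pairing is a fixed-point-free involution. $f_1=(1\,\hat n)(2\,\hat1)(3\,\hat2)\cdots(n\,\widehat{n-1})$ and $f_2=(1\,\hat1)(2\,\hat2)\cdots(n\,\hat n)$. A set partition is stable by a permutation $f$ if $f$ maps each block onto itself. *)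

theory Defs
  imports Main "HOL-Library.Disjoint_Sets"
begin

text \<open>Elements of the ground set: (i, False) is the non-hat number i,
  (i, True) is the hat number hat i.\<close>

definition ground :: "nat \<Rightarrow> (nat \<times> bool) set" where
  "ground n = {1..n} \<times> UNIV"

definition is_hat :: "nat \<times> bool \<Rightarrow> bool" where
  "is_hat x = snd x"

definition pairing :: "nat \<Rightarrow> (nat \<times> bool \<Rightarrow> nat \<times> bool) \<Rightarrow> bool" where
  "pairing n f \<longleftrightarrow> (\<forall>x. x \<notin> ground n \<longrightarrow> f x = x) \<and>
     (\<forall>x\<in>ground n. f x \<in> ground n \<and> f (f x) = x \<and> f x \<noteq> x)"

text \<open>f1 = (1 hat n)(2 hat 1)(3 hat 2)...(n hat(n-1)).\<close>
definition f1 :: "nat \<Rightarrow> nat \<times> bool \<Rightarrow> nat \<times> bool" where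
  "f1 n x = (if x \<in> ground n then
      (case x of (i, False) \<Rightarrow> (if i = 1 then n else i - 1, True)
               | (j, True) \<Rightarrow> (if j = n then 1 else j + 1, False))
    else x)"

definition f2 :: "nat \<Rightarrow> nat \<times> bool \<Rightarrow> nat \<times> bool" where
  "f2 n x = (if x \<in> ground n then (fst x, \<not> snd x) else x)"

definition stable_by :: "('a \<Rightarrow> 'a) \<Rightarrow> 'a set set \<Rightarrow> bool" where
  "stable_by f P \<longleftrightarrow> (\<forall>B\<in>P. f ` B = B)"

end

theory Submission
  imports Defs
begin

text \<open>Both f1 and f2 exchange hat and non-hat numbers. A block stable by such a map is
  mapped bijectively onto itself, and the map sends its non-hat part onto its hat part.\<close>

lemma card_filter_eq_card_filter_not_if_swapping:
  assumes "finite B" and "f ` B = B" and "\<And>x. x \<in> B \<Longrightarrow> P (f x) \<longleftrightarrow> \<not> P x"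
  shows "card {x\<in>B. P x} = card {x\<in>B. \<not> P x}"
proof -
  have "inj_on f B"
    using assms(1,2) by (simp add: eq_card_imp_inj_on)
  then have "card (f ` {x\<in>B. \<not> P x}) = card {x\<in>B. \<not> P x}"
    by (rule card_image[OF inj_on_subset]) auto
  moreover have "f ` {x\<in>B. \<not> P x} = {x\<in>B. P x}"
  proof
    show "f ` {x\<in>B. \<not> P x} \<subseteq> {x\<in>B. P x}"
      using assms(2,3) by auto
    show "{x\<in>B. P x} \<subseteq> f ` {x\<in>B. \<not> P x}"
    proof
      fix y assume "y \<in> {x\<in>B. P x}"
      moreover obtain x where "x \<in> B" "y = f x"
        using \<open>y \<in> {x\<in>B. P x}\<close> assms(2) by blast
      ultimately show "y \<in> f ` {x\<in>B. \<not> P x}"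
        using assms(3) by auto
    qed
  qed
  ultimately show ?thesis
    by simp
qed

lemma finite_ground: "finite (ground n)"
  unfolding ground_def by simp

lemma is_hat_f1: "x \<in> ground n \<Longrightarrow> is_hat (f1 n x) \<longleftrightarrow> \<not> is_hat x"
  unfolding f1_def is_hat_def by (cases x; cases "snd x") auto

lemma is_hat_f2: "x \<in> ground n \<Longrightarrow> is_hat (f2 n x) \<longleftrightarrow> \<not> is_hat x"
  unfolding f2_def is_hat_def by simp

lemma hat_balanced_if_stable_by_hat_swap:
  assumes "partition_on (ground n) \<pi>" and "stable_by f \<pi>"
    and "\<And>x. x \<in> ground n \<Longrightarrow> is_hat (f x) \<longleftrightarrow> \<not> is_hat x"
    and "B \<in> \<pi>"
  shows "card {x\<in>B. is_hat x} = card {x\<in>B. \<not> is_hat x}"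
proof (rule card_filter_eq_card_filter_not_if_swapping)
  have "B \<subseteq> ground n"
    using assms(1,4) by (auto simp: partition_on_def)
  then show "finite B"
    using finite_ground finite_subset by blast
  show "f ` B = B"
    using assms(2,4) by (simp add: stable_by_def)
  show "is_hat (f x) \<longleftrightarrow> \<not> is_hat x" if "x \<in> B" for x
    using assms(3) \<open>B \<subseteq> ground n\<close> that by blast
qed

theorem lemma1:
  fixes n :: nat and f3 :: "nat \<times> bool \<Rightarrow> nat \<times> bool"
    and \<pi>1 \<pi>2 :: "(nat \<times> bool) set set"
  assumes "n \<ge> 1"
    and "pairing n f3"
    and "partition_on (ground n) \<pi>1" and "stable_by (f1 n) \<pi>1" and "stable_by f3 \<pi>1"
    and "partition_on (ground n) \<pi>2" and "stable_by (f2 n) \<pi>2" and "stable_by f3 \<pi>2"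
    and "\<forall>B\<in>\<pi>1. even (card B)" and "\<forall>B\<in>\<pi>2. even (card B)"
  shows "\<forall>B\<in>\<pi>1 \<union> \<pi>2. card {x\<in>B. is_hat x} = card {x\<in>B. \<not> is_hat x}"
  using hat_balanced_if_stable_by_hat_swap[OF assms(3,4) is_hat_f1]
    hat_balanced_if_stable_by_hat_swap[OF assms(6,7) is_hat_f2]
  by blast

end
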